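(* Let $\mathbf{E},\mathbf{F}$ be finite-dimensional Euclidean spaces, $\mathcal{K}\subset\mathbf{E}$ a proper cone, $\mathcal{A}:\mathbf{E}\to\mathbf{F}$ linear, $b\in\mathbf{F}$, $c\in\mathbf{E}$, and consider the conic program $\min\{\langle c,x\rangle : \mathcal{A}x=b,\ x\in\mathcal{K}\}$ with solution set $\mathcal{X}_\star$ and its dual $\max\{\langle b,y\rangle : c-\mathcal{A}^*y\in\mathcal{K}^*\}$ with solution set $\mathcal{Y}_\star$. Suppose strong duality holds, and suppose dual strict complementarity holds for a primal–dual solution pair $(x_\star,y_\star)\in\mathcal{X}_\star\times\mathcal{Y}_\star$ with slack $s_\star=c-\mathcal{A}^*y_\star$, i.e. $x_\star\in\mathrm{relint}(\mathcal{F}_{s_\star})$. Then there are constants $\gamma,\gamma'\ge 0$ such that for every $x\in\mathcal{V}_{s_\star}$, $$\mathrm{dist}(x,\mathcal{X}_\star)\le \gamma\|\mathcal{A}(x)-b\|_2+\gamma'\,\mathrm{dist}(x,\mathcal{F}_{s_\star}).$$ Moreover, if $\mathcal{X}_\star$ is a singleton, then one may take $\gamma'=0$ and $\gamma=1/\sigma_{\min}(\mathcal{A}_{\mathcal{V}_{s_\star}})$, where $\mathcal{A}_{\mathcal{V}_{s_\star}}$ is the restriction of $\mathcal{A}$ to $\mathcal{V}_{s_\star}$ and $\sigma_{\min}(\mathcal{A}_{\mathcal{V}_{s_\star}})=\min_{x\in\mathcal{V}_{s_\star},\|x\|_2=1}\|\mathcal{A}x\|_2$.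
   Context: $\mathcal{K}^*=\{s\in\mathbf{E}:\langle s,x\rangle\ge0\ \forall x\in\mathcal{K}\}$ is the dual cone. Strong duality means: $\mathcal{X}_\star$ and $\mathcal{Y}_\star$ are nonempty, $\mathcal{X}_\star$ is compact, and there is a pair $(x_\star,y_\star)\in\mathcal{X}_\star\times\mathcal{Y}_\star$ with $\langle c,x_\star\rangle=\langle b,y_\star\rangle$, equivalently $\langle s_\star,x_\star\rangle=0$ where $s_\star=c-\mathcal{A}^*y_\star$. For a dual solution $y_\star$ with $s_\star=c-\mathcal{A}^*y_\star$, the complementary face is $\mathcal{F}_{s_\star}=\{x\in\mathcal{K}:\langle x,s_\star\rangle=0\}$ and the complementary space is $\mathcal{V}_{s_\star}=\mathrm{aff}(\mathcal{F}_{s_\star})$ (a linear subspace). $\mathrm{dist}(x,C)=\inf_{z\in C}\|x-z\|_2$; $\mathrm{relint}$ denotes relative interior. *)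

theory Defs
  imports "HOL-Analysis.Analysis"
begin

definition proper_cone :: "'a::euclidean_space set \<Rightarrow> bool" where
  "proper_cone K \<longleftrightarrow> cone K \<and> convex K \<and> closed K \<and> interior K \<noteq> {} \<and>
     (\<forall>x. x \<in> K \<and> -x \<in> K \<longrightarrow> x = 0)"

definition dual_cone :: "'a::real_inner set \<Rightarrow> 'a set" where
  "dual_cone K = {s. \<forall>x\<in>K. s \<bullet> x \<ge> 0}"

definition primal_sol ::
  "('e::euclidean_space \<Rightarrow> 'f::euclidean_space) \<Rightarrow> 'f \<Rightarrow> 'e \<Rightarrow> 'e set \<Rightarrow> 'e set" where
  "primal_sol A b c K =
     {x. x \<in> K \<and> A x = b \<and> (\<forall>z. z \<in> K \<and> A z = b \<longrightarrow> c \<bullet> x \<le> c \<bullet> z)}"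

definition dual_sol ::
  "('e::euclidean_space \<Rightarrow> 'f::euclidean_space) \<Rightarrow> 'f \<Rightarrow> 'e \<Rightarrow> 'e set \<Rightarrow> 'f set" where
  "dual_sol A b c K =
     {y. c - adjoint A y \<in> dual_cone K \<and>
         (\<forall>y'. c - adjoint A y' \<in> dual_cone K \<longrightarrow> b \<bullet> y' \<le> b \<bullet> y)}"

definition comp_face :: "'a::real_inner set \<Rightarrow> 'a \<Rightarrow> 'a set" where
  "comp_face K s = {x \<in> K. x \<bullet> s = 0}"

definition comp_space :: "'a::real_inner set \<Rightarrow> 'a \<Rightarrow> 'a set" where
  "comp_space K s = affine hull (comp_face K s)"

definition sigma_min :: "('e::real_normed_vector \<Rightarrow> 'f::real_normed_vector) \<Rightarrow> 'e set \<Rightarrow> real" where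
  "sigma_min A V = Inf ((\<lambda>x. norm (A x)) ` {x \<in> V. norm x = 1})"

end

theory Submission
  imports Defs
begin

text \<open>
  By complementary slackness the solution set is the slice \<open>{x \<in> F. A x = b}\<close> of the
  complementary face \<open>F\<close>, a closed convex cone. Compactness of the slice excludes recession
  directions, so \<open>A\<close> is injective on \<open>F\<close> and \<open>\<mu> * norm d \<le> norm (A d)\<close> there. Given
  \<open>p \<in> F\<close>, a bounded right inverse of \<open>A\<close> on \<open>span F\<close> yields a correction \<open>w\<close> of size
  \<open>O(norm (A p - b))\<close> with \<open>A (p + w) = b\<close>; \<open>p + w\<close> may leave \<open>F\<close>, but mixing it with the
  relative interior point \<open>xs\<close>, with weight proportional to the residual, brings it back.
  A general point is first projected onto \<open>F\<close>. For a unique solution, relative interiority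
  makes \<open>A\<close> injective on \<open>span F\<close>, so \<open>sigma_min\<close> is positive and is the sharp constant.
\<close>

lemma conic_linear_bounded_below:
  fixes A :: "'a::euclidean_space \<Rightarrow> 'b::real_normed_vector"
  assumes "closed F" "conic F" "linear A"
    and inj: "\<And>d. d \<in> F \<Longrightarrow> A d = 0 \<Longrightarrow> d = 0"
  shows "\<exists>\<mu>>0. \<forall>d\<in>F. \<mu> * norm d \<le> norm (A d)"
proof -
  define S where "S = F \<inter> sphere 0 1"
  have normalized: "(1 / norm d) *\<^sub>R d \<in> S" if "d \<in> F" "d \<noteq> 0" for d
    using that \<open>conic F\<close> unfolding S_def by (auto simp: conicD)
  show ?thesis
  proof (cases "S = {}")
    case True
    then have "F \<subseteq> {0}" using normalized by blast
    then show ?thesis by (intro exI[of _ 1]) auto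
  next
    case False
    have "compact S" unfolding S_def using \<open>closed F\<close> by (simp add: closed_Int_compact)
    moreover have "continuous_on S (\<lambda>d. norm (A d))"
      using \<open>linear A\<close> by (intro continuous_intros linear_continuous_on) (simp add: linear_conv_bounded_linear)
    ultimately obtain d0 where d0: "d0 \<in> S" "\<forall>d\<in>S. norm (A d0) \<le> norm (A d)"
      using continuous_attains_inf[OF _ False] by blast
    have "norm (A d0) > 0" using d0(1) inj unfolding S_def by fastforce
    moreover have "norm (A d0) * norm d \<le> norm (A d)" if "d \<in> F" for d
    proof (cases "d = 0")
      case False
      have "norm (A d0) \<le> norm (A ((1 / norm d) *\<^sub>R d))" using d0(2) normalized[OF that False] by blast
      also have "\<dots> = norm (A d) / norm d" using \<open>linear A\<close> by (simp add: linear_scale)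
      finally show ?thesis using False by (simp add: field_simps)
    qed simp
    ultimately show ?thesis by blast
  qed
qed

lemma linear_right_inverse_bound_on_subspace:
  fixes A :: "'a::euclidean_space \<Rightarrow> 'b::real_normed_vector"
  assumes "subspace W" "linear A"
  shows "\<exists>\<kappa>>0. \<forall>v\<in>W. \<exists>w\<in>W. A w = A v \<and> norm w \<le> \<kappa> * norm (A v)"
proof -
  define N where "N = {n\<in>W. A n = 0}"
  define W' where "W' = {v\<in>W. \<forall>n\<in>N. v \<bullet> n = 0}"
  have "subspace N"
    using assms unfolding N_def subspace_def by (auto simp: linear_add linear_scale linear_0)
  then have spanN: "span N = N" by (simp add: span_eq_iff)
  have "subspace W'" using \<open>subspace W\<close> unfolding W'_def subspace_def by (auto simp: inner_add_left)
  have injW': "v = 0" if "v \<in> W'" "A v = 0" for v using that unfolding W'_def N_def by auto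
  obtain \<mu> where \<mu>: "\<mu> > 0" "\<forall>v\<in>W'. \<mu> * norm v \<le> norm (A v)"
    using conic_linear_bounded_below[OF closed_subspace subspace_imp_conic \<open>linear A\<close> injW']
      \<open>subspace W'\<close> by blast
  have "\<exists>w\<in>W. A w = A v \<and> norm w \<le> 1 / \<mu> * norm (A v)" if v: "v \<in> W" for v
  proof -
    obtain y z where y: "y \<in> N" and z: "\<And>w. w \<in> N \<Longrightarrow> orthogonal z w" and "v = y + z"
      using orthogonal_subspace_decomp_exists[of N v, unfolded spanN] by metis
    then have "z \<in> W" "A z = A v"
      using v \<open>subspace W\<close> \<open>linear A\<close> unfolding N_def
      by (simp_all add: linear_add) (metis add_diff_cancel_left' subspace_diff)
    moreover have "z \<in> W'" using \<open>z \<in> W\<close> z unfolding W'_def orthogonal_def by blast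
    ultimately have "\<mu> * norm z \<le> norm (A v)" using \<mu>(2) by metis
    then have "norm z \<le> 1 / \<mu> * norm (A v)" using \<mu>(1) by (simp add: field_simps)
    then show ?thesis using \<open>z \<in> W\<close> \<open>A z = A v\<close> by blast
  qed
  then show ?thesis using \<mu>(1) by (intro exI[of _ "1 / \<mu>"]) auto
qed

lemma convex_combination_toward_rel_interior_mem:
  fixes F :: "'a::real_normed_vector set"
  assumes "convex F" "x0 \<in> F" "cball x0 \<delta> \<inter> span F \<subseteq> F" "p \<in> F" "w \<in> span F"
    and "0 < l" "l \<le> 1" "(1 - l) * norm w \<le> l * \<delta>"
  shows "(1 - l) *\<^sub>R (p + w) + l *\<^sub>R x0 \<in> F"
proof -
  define y where "y = x0 + ((1 - l) / l) *\<^sub>R w"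
  have "norm (y - x0) \<le> \<delta>"
    using assms(6-8) by (simp add: y_def divide_simps mult.commute)
  moreover have "y \<in> span F" using assms(2,5) by (simp add: y_def span_base span_add span_scale)
  ultimately have "y \<in> F" using assms(3) by (auto simp: dist_norm norm_minus_commute)
  moreover have "l *\<^sub>R y = l *\<^sub>R x0 + (1 - l) *\<^sub>R w"
    using \<open>0 < l\<close> by (simp add: y_def scaleR_add_right)
  then have "(1 - l) *\<^sub>R (p + w) + l *\<^sub>R x0 = (1 - l) *\<^sub>R p + l *\<^sub>R y"
    by (simp add: algebra_simps)
  ultimately show ?thesis using assms(1,4,6,7) by (simp add: convexD)
qed

lemma infdist_slice_le_convex_combination:
  fixes A :: "'a::real_normed_vector \<Rightarrow> 'b::real_normed_vector"
  assumes "convex F" "linear A" "x0 \<in> F" "A x0 = b" "cball x0 \<delta> \<inter> span F \<subseteq> F"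
    and "p \<in> F" "w \<in> span F" "A (p + w) = b"
    and "0 < t" "t \<le> 1" "(1 - t) * norm w \<le> t * \<delta>"
  shows "infdist p {x\<in>F. A x = b} \<le> t * norm (p - x0) + norm w"
proof -
  define z where "z = (1 - t) *\<^sub>R (p + w) + t *\<^sub>R x0"
  have "z \<in> F"
    unfolding z_def using assms(1,3,5,6,7,9-11) by (rule convex_combination_toward_rel_interior_mem)
  moreover have "A z = (1 - t) *\<^sub>R A (p + w) + t *\<^sub>R A x0"
    using assms(2) by (simp add: z_def linear_add linear_scale)
  then have "A z = b" using assms(4,8) by (simp add: scaleR_collapse)
  ultimately have "infdist p {x\<in>F. A x = b} \<le> norm (t *\<^sub>R (p - x0) - (1 - t) *\<^sub>R w)"
    by (intro infdist_le2) (auto simp: z_def dist_norm algebra_simps)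
  also have "\<dots> \<le> t * norm (p - x0) + (1 - t) * norm w"
    using norm_triangle_ineq4[of "t *\<^sub>R (p - x0)" "(1 - t) *\<^sub>R w"] assms(9,10) by simp
  also have "(1 - t) * norm w \<le> norm w"
    using mult_left_le_one_le[of "norm w" "1 - t"] assms(9,10) by simp
  finally show ?thesis by simp
qed

lemma slice_error_bound_explicit:
  fixes A :: "'a::real_normed_vector \<Rightarrow> 'b::real_normed_vector"
  assumes "convex F" "linear A" "x0 \<in> F" "A x0 = b"
    and "\<delta> > 0" "cball x0 \<delta> \<inter> span F \<subseteq> F"
    and "\<kappa> > 0" "\<And>v. v \<in> span F \<Longrightarrow> \<exists>w\<in>span F. A w = A v \<and> norm w \<le> \<kappa> * norm (A v)"
    and "\<mu> > 0" "\<And>d. d \<in> F \<Longrightarrow> \<mu> * norm d \<le> norm (A d)"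
    and "p \<in> F"
  shows "infdist p {x\<in>F. A x = b}
           \<le> (1 / \<mu> + \<kappa> + \<kappa> * (norm b / \<mu> + norm x0) / \<delta>) * norm (A p - b)"
proof -
  define r where "r = norm (A p - b)"
  define C where "C = norm b / \<mu> + norm x0"
  define t where "t = min 1 (\<kappa> * r / \<delta>)"
    \<comment> \<open>weight of \<open>x0\<close>; for large residuals it is \<open>1\<close> and the nearby solution is \<open>x0\<close> itself\<close>
  have "\<mu> * norm p \<le> r + norm b"
    using assms(10)[OF \<open>p \<in> F\<close>] norm_triangle_ineq[of "A p - b" b] by (simp add: r_def)
  then have "norm p \<le> r / \<mu> + norm b / \<mu>"
    using \<open>\<mu> > 0\<close> by (simp add: field_simps)
  then have "norm (p - x0) \<le> r / \<mu> + C"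
    using norm_triangle_ineq4[of p x0] by (simp add: C_def)
  have "x0 - p \<in> span F" using assms(3,11) by (simp add: span_base span_diff)
  then obtain w where "w \<in> span F" "A (p + w) = b" and norm_w: "norm w \<le> \<kappa> * r"
    using assms(8)[of "x0 - p"] assms(2,4) by (auto simp: linear_add linear_diff r_def norm_minus_commute)
  show ?thesis
  proof (cases "r = 0")
    case True
    then have "p \<in> {x\<in>F. A x = b}" using \<open>p \<in> F\<close> by (simp add: r_def)
    then show ?thesis using True by (simp add: r_def infdist_le2[of p _ p])
  next
    case False
    then have "0 < t" "t \<le> 1" "t \<le> \<kappa> * r / \<delta>" "t * \<delta> = \<kappa> * r \<or> t = 1"
      using assms(5,7) by (auto simp: t_def r_def min_def)
    then have "(1 - t) * norm w \<le> t * \<delta>"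
      using norm_w mult_left_le_one_le[of "norm w" "1 - t"] \<open>\<delta> > 0\<close> by auto
    then have "infdist p {x\<in>F. A x = b} \<le> t * norm (p - x0) + norm w"
      using infdist_slice_le_convex_combination[OF assms(1-4,6,11)] \<open>w \<in> span F\<close> \<open>A (p + w) = b\<close>
        \<open>0 < t\<close> \<open>t \<le> 1\<close> by blast
    also have "\<dots> \<le> t * (r / \<mu> + C) + \<kappa> * r"
      using \<open>norm (p - x0) \<le> r / \<mu> + C\<close> \<open>0 < t\<close> norm_w by (intro add_mono mult_left_mono) auto
    also have "\<dots> \<le> r / \<mu> + \<kappa> * r / \<delta> * C + \<kappa> * r"
    proof -
      have "r / \<mu> \<ge> 0" "C \<ge> 0" using \<open>\<mu> > 0\<close> by (simp_all add: r_def C_def)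
      then have "t * (r / \<mu>) \<le> r / \<mu>" "t * C \<le> \<kappa> * r / \<delta> * C"
        using \<open>0 < t\<close> \<open>t \<le> 1\<close> \<open>t \<le> \<kappa> * r / \<delta>\<close>
        by (auto intro: mult_left_le_one_le mult_right_mono simp del: times_divide_eq_right times_divide_eq_left)
      then show ?thesis by (simp add: distrib_left)
    qed
    finally show ?thesis by (simp add: r_def C_def field_simps)
  qed
qed

lemma convex_cone_affine_hull_eq_span: "convex_cone F \<Longrightarrow> affine hull F = span F"
  by (rule affine_hull_span_0) (simp add: hull_inc convex_cone_contains_0)

lemma convex_cone_rel_interior_cball:
  assumes "convex_cone F" "x0 \<in> rel_interior F"
  obtains \<delta> where "\<delta> > 0" "cball x0 \<delta> \<inter> span F \<subseteq> F"
  using assms by (auto simp: mem_rel_interior_cball convex_cone_affine_hull_eq_span)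

lemma bounded_slice_imp_kernel_trivial:
  fixes A :: "'a::real_normed_vector \<Rightarrow> 'b::real_vector"
  assumes "convex_cone F" "linear A" "x0 \<in> F" "A x0 = b" "bounded {x\<in>F. A x = b}"
    and "d \<in> F" "A d = 0"
  shows "d = 0"
proof (rule ccontr)
  assume "d \<noteq> 0"
  obtain B where B: "\<And>x. x \<in> F \<Longrightarrow> A x = b \<Longrightarrow> norm x \<le> B"
    using assms(5) by (auto simp: bounded_iff)
  define t where "t = (\<bar>B\<bar> + norm x0 + 1) / norm d"
  have "t \<ge> 0" by (simp add: t_def)
  then have "x0 + t *\<^sub>R d \<in> F"
    using assms(1,3,6) by (simp add: convex_cone_add convex_cone_scaleR)
  moreover have "A (x0 + t *\<^sub>R d) = b" using assms(2,4,7) by (simp add: linear_add linear_scale)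
  ultimately have "norm (x0 + t *\<^sub>R d) \<le> B" by (rule B)
  moreover have "norm (t *\<^sub>R d) = \<bar>B\<bar> + norm x0 + 1" using \<open>d \<noteq> 0\<close> by (simp add: t_def)
  ultimately show False using norm_triangle_ineq4[of "x0 + t *\<^sub>R d" x0] by simp
qed

lemma conic_slice_error_bound:
  fixes A :: "'a::euclidean_space \<Rightarrow> 'b::real_normed_vector"
  assumes "closed F" "convex_cone F" "linear A" "x0 \<in> rel_interior F" "A x0 = b"
    and "bounded {x\<in>F. A x = b}"
  shows "\<exists>\<gamma>\<ge>0. \<forall>p\<in>F. infdist p {x\<in>F. A x = b} \<le> \<gamma> * norm (A p - b)"
proof -
  have "x0 \<in> F" using assms(4) rel_interior_subset by blast
  obtain \<delta> where \<delta>: "\<delta> > 0" "cball x0 \<delta> \<inter> span F \<subseteq> F"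
    using convex_cone_rel_interior_cball[OF assms(2,4)] .
  have "convex F" "conic F" using assms(2) by (simp_all add: convex_cone_def)
  have "d = 0" if "d \<in> F" "A d = 0" for d
    using bounded_slice_imp_kernel_trivial[OF assms(2,3) \<open>x0 \<in> F\<close> assms(5,6) that] .
  then obtain \<mu> where \<mu>: "\<mu> > 0" "\<forall>d\<in>F. \<mu> * norm d \<le> norm (A d)"
    using conic_linear_bounded_below[OF assms(1) \<open>conic F\<close> assms(3)] by blast
  obtain \<kappa> where \<kappa>: "\<kappa> > 0" "\<forall>v\<in>span F. \<exists>w\<in>span F. A w = A v \<and> norm w \<le> \<kappa> * norm (A v)"
    using linear_right_inverse_bound_on_subspace[OF subspace_span assms(3)] by blast
  show ?thesis
    using slice_error_bound_explicit[OF \<open>convex F\<close> assms(3) \<open>x0 \<in> F\<close> assms(5) \<delta> \<kappa>(1) _ \<mu>(1)]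
      \<kappa> \<mu> \<delta>(1) by (intro exI[of _ "1 / \<mu> + \<kappa> + \<kappa> * (norm b / \<mu> + norm x0) / \<delta>"]) auto
qed

lemma infdist_le_residual_plus_infdist:
  fixes A :: "'a::euclidean_space \<Rightarrow> 'b::real_normed_vector"
  assumes "closed F" "F \<noteq> {}" "linear A" "\<gamma> \<ge> 0"
    and bound: "\<And>p. p \<in> F \<Longrightarrow> infdist p X \<le> \<gamma> * norm (A p - b)"
  shows "infdist x X \<le> \<gamma> * norm (A x - b) + (1 + \<gamma> * onorm A) * infdist x F"
proof -
  obtain p where "p \<in> F" and p: "infdist x F = dist x p"
    using infdist_attains_inf[OF assms(1,2)] by blast
  have "norm (A p - b) \<le> norm (A x - b) + norm (A (p - x))"
    using assms(3) norm_triangle_ineq[of "A x - b" "A (p - x)"] by (simp add: linear_diff)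
  also have "norm (A (p - x)) \<le> onorm A * dist x p"
    using onorm[of A "p - x"] assms(3) by (simp add: linear_conv_bounded_linear dist_norm norm_minus_commute)
  finally have "\<gamma> * norm (A p - b) \<le> \<gamma> * (norm (A x - b) + onorm A * dist x p)"
    using assms(4) by (simp add: mult_left_mono)
  then show ?thesis
    using infdist_triangle[of x X p] bound[OF \<open>p \<in> F\<close>] by (simp add: p algebra_simps)
qed

lemma sigma_min_mult_norm_le:
  assumes "linear A" "conic V" "v \<in> V"
  shows "sigma_min A V * norm v \<le> norm (A v)"
proof (cases "v = 0")
  case False
  have "(1 / norm v) *\<^sub>R v \<in> {x \<in> V. norm x = 1}"
    using assms(2,3) False by (simp add: conicD)
  then have "sigma_min A V \<le> norm (A ((1 / norm v) *\<^sub>R v))"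
    unfolding sigma_min_def by (intro cInf_lower bdd_belowI[of _ 0]) auto
  then show ?thesis using assms(1) False by (simp add: linear_scale field_simps)
qed (simp add: assms(1) linear_0)

lemma sigma_min_pos:
  fixes A :: "'a::euclidean_space \<Rightarrow> 'b::real_normed_vector"
  assumes "subspace V" "linear A" "v \<in> V" "v \<noteq> 0"
    and inj: "\<And>u. u \<in> V \<Longrightarrow> A u = 0 \<Longrightarrow> u = 0"
  shows "sigma_min A V > 0"
proof -
  obtain \<mu> where \<mu>: "\<mu> > 0" "\<forall>u\<in>V. \<mu> * norm u \<le> norm (A u)"
    using conic_linear_bounded_below[OF closed_subspace subspace_imp_conic assms(2) inj] assms(1)
    by blast
  have "(1 / norm v) *\<^sub>R v \<in> {x \<in> V. norm x = 1}"
    using assms(1,3,4) by (simp add: subspace_scale)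
  then have "\<mu> \<le> sigma_min A V"
    unfolding sigma_min_def using \<mu>(2) by (intro cInf_greatest) auto
  then show ?thesis using \<mu>(1) by simp
qed

lemma unique_slice_point_imp_kernel_trivial:
  fixes A :: "'a::real_normed_vector \<Rightarrow> 'b::real_vector"
  assumes "convex_cone F" "linear A" "x0 \<in> rel_interior F" "{x\<in>F. A x = b} = {x0}"
    and "v \<in> span F" "A v = 0"
  shows "v = 0"
proof (rule ccontr)
  assume "v \<noteq> 0"
  obtain \<delta> where "\<delta> > 0" and \<delta>: "cball x0 \<delta> \<inter> span F \<subseteq> F"
    using convex_cone_rel_interior_cball[OF assms(1,3)] .
  define y where "y = x0 + (\<delta> / norm v) *\<^sub>R v"
  have "x0 \<in> F" "A x0 = b" using assms(4) by auto
  then have "y \<in> span F" using assms(5) by (simp add: y_def span_base span_add span_scale)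
  moreover have "dist x0 y = \<delta>" using \<open>v \<noteq> 0\<close> \<open>\<delta> > 0\<close> by (simp add: y_def dist_norm)
  ultimately have "y \<in> F" using \<delta> by auto
  moreover have "A y = b" using assms(2,6) \<open>A x0 = b\<close> by (simp add: y_def linear_add linear_scale)
  ultimately have "y = x0" using assms(4) by blast
  then show False using \<open>v \<noteq> 0\<close> \<open>\<delta> > 0\<close> by (simp add: y_def)
qed

lemma unique_slice_infdist_le_sigma_min:
  fixes A :: "'a::euclidean_space \<Rightarrow> 'b::real_normed_vector"
  assumes "convex_cone F" "linear A" "x0 \<in> rel_interior F" "{x\<in>F. A x = b} = {x0}"
    and "x \<in> span F"
  shows "infdist x {x0} \<le> 1 / sigma_min A (span F) * norm (A x - b)"
proof (cases "x = x0")
  case False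
  have "x0 \<in> F" "A x0 = b" using assms(4) by auto
  then have "x - x0 \<in> span F" and A_diff: "A (x - x0) = A x - b"
    using assms(2,5) by (simp_all add: span_base span_diff linear_diff)
  have "sigma_min A (span F) > 0"
    using sigma_min_pos[OF subspace_span assms(2) \<open>x - x0 \<in> span F\<close>] False
      unique_slice_point_imp_kernel_trivial[OF assms(1-4)] by auto
  moreover have "sigma_min A (span F) * norm (x - x0) \<le> norm (A x - b)"
    using sigma_min_mult_norm_le[OF assms(2) subspace_imp_conic[OF subspace_span]
        \<open>x - x0 \<in> span F\<close>] A_diff by simp
  ultimately show ?thesis by (simp add: dist_norm field_simps)
qed (use assms(4) in auto)

lemma proper_cone_imp_convex_cone: "proper_cone K \<Longrightarrow> convex_cone K"
  unfolding proper_cone_def convex_cone_def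
  by (metis cone_def conic_def empty_iff interior_subset subsetI subset_antisym)

lemma comp_face_eq_Int_hyperplane: "comp_face K s = K \<inter> {x. s \<bullet> x = 0}"
  by (auto simp: comp_face_def inner_commute)

lemma closed_comp_face: "closed K \<Longrightarrow> closed (comp_face K s)"
  by (simp add: comp_face_eq_Int_hyperplane closed_Int closed_hyperplane)

lemma convex_cone_comp_face: "convex_cone K \<Longrightarrow> convex_cone (comp_face K s)"
  by (simp add: convex_cone_iff comp_face_def inner_add_left)

lemma comp_space_eq_span: "convex_cone K \<Longrightarrow> comp_space K s = span (comp_face K s)"
  by (simp add: comp_space_def convex_cone_affine_hull_eq_span convex_cone_comp_face)

lemma duality_gap_eq_inner_slack:
  fixes A :: "'e::euclidean_space \<Rightarrow> 'f::euclidean_space"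
  assumes "linear A" "A x = b"
  shows "c \<bullet> x - b \<bullet> y = x \<bullet> (c - adjoint A y)"
  using adjoint_works[OF assms(1), of x y] assms(2) by (simp add: inner_diff_right inner_commute)

lemma primal_sol_eq_comp_face_slice:
  fixes A :: "'e::euclidean_space \<Rightarrow> 'f::euclidean_space"
  assumes "linear A" "xs \<in> primal_sol A b c K" "ys \<in> dual_sol A b c K" "c \<bullet> xs = b \<bullet> ys"
  shows "primal_sol A b c K = {x \<in> comp_face K (c - adjoint A ys). A x = b}"
proof -
  have slack: "x \<bullet> (c - adjoint A ys) \<ge> 0" if "x \<in> K" for x
    using assms(3) that by (auto simp: dual_sol_def dual_cone_def inner_commute)
  have gap: "c \<bullet> x - c \<bullet> xs = x \<bullet> (c - adjoint A ys)" if "A x = b" for x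
    using duality_gap_eq_inner_slack[OF assms(1) that] assms(4) by simp
  show ?thesis
  proof (intro set_eqI iffI)
    fix x assume "x \<in> primal_sol A b c K"
    then have "x \<in> K" "A x = b" "c \<bullet> x \<le> c \<bullet> xs"
      using assms(2) by (auto simp: primal_sol_def)
    then show "x \<in> {x \<in> comp_face K (c - adjoint A ys). A x = b}"
      using slack[of x] gap[of x] by (auto simp: comp_face_def)
  next
    fix x assume "x \<in> {x \<in> comp_face K (c - adjoint A ys). A x = b}"
    then have "x \<in> K" "A x = b" and "x \<bullet> (c - adjoint A ys) = 0" by (auto simp: comp_face_def)
    moreover have "c \<bullet> x \<le> c \<bullet> z" if "z \<in> K" "A z = b" for z
      using slack[OF that(1)] gap[OF that(2)] gap[OF \<open>A x = b\<close>] \<open>x \<bullet> _ = 0\<close> by simp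
    ultimately show "x \<in> primal_sol A b c K" by (simp add: primal_sol_def)
  qed
qed

theorem lemma2:
  fixes K :: "'e::euclidean_space set"
    and A :: "'e \<Rightarrow> 'f::euclidean_space"
    and b :: 'f and c :: 'e and xs :: 'e and ys :: 'f
  assumes cone: "proper_cone K"
    and lin: "linear A"
    and X_ne: "primal_sol A b c K \<noteq> {}"
    and Y_ne: "dual_sol A b c K \<noteq> {}"
    and X_cpt: "compact (primal_sol A b c K)"
    and xs: "xs \<in> primal_sol A b c K"
    and ys: "ys \<in> dual_sol A b c K"
    and gap: "c \<bullet> xs = b \<bullet> ys"
    and dsc: "xs \<in> rel_interior (comp_face K (c - adjoint A ys))"
  shows "(\<exists>\<gamma> \<gamma>'. \<gamma> \<ge> 0 \<and> \<gamma>' \<ge> 0 \<and>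
            (\<forall>x \<in> comp_space K (c - adjoint A ys).
               infdist x (primal_sol A b c K)
                 \<le> \<gamma> * norm (A x - b) + \<gamma>' * infdist x (comp_face K (c - adjoint A ys))))
       \<and> ((\<exists>x0. primal_sol A b c K = {x0}) \<longrightarrow>
            (\<forall>x \<in> comp_space K (c - adjoint A ys).
               infdist x (primal_sol A b c K)
                 \<le> (1 / sigma_min A (comp_space K (c - adjoint A ys))) * norm (A x - b)))"
proof -
  define F where "F = comp_face K (c - adjoint A ys)"
  have K: "convex_cone K" "closed K" using cone by (simp_all add: proper_cone_imp_convex_cone proper_cone_def)
  then have F: "convex_cone F" "closed F" "F \<noteq> {}"
    by (simp_all add: F_def convex_cone_comp_face closed_comp_face convex_cone_nonempty)
  have X: "primal_sol A b c K = {x\<in>F. A x = b}"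
    unfolding F_def by (rule primal_sol_eq_comp_face_slice[OF lin xs ys gap])
  have V: "comp_space K (c - adjoint A ys) = span F" by (simp add: F_def comp_space_eq_span K(1))
  have Axs: "A xs = b" using xs by (simp add: primal_sol_def)
  obtain \<gamma> where "\<gamma> \<ge> 0" and \<gamma>: "\<forall>p\<in>F. infdist p {x\<in>F. A x = b} \<le> \<gamma> * norm (A p - b)"
    using conic_slice_error_bound[OF F(2,1) lin dsc[folded F_def] Axs] X_cpt
    by (auto simp: X compact_imp_bounded)
  have "0 \<le> 1 + \<gamma> * onorm A"
    using \<open>\<gamma> \<ge> 0\<close> lin by (simp add: onorm_pos_le linear_conv_bounded_linear)
  then have "\<exists>\<gamma> \<gamma>'. \<gamma> \<ge> 0 \<and> \<gamma>' \<ge> 0 \<and>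
      (\<forall>x \<in> span F. infdist x {x\<in>F. A x = b} \<le> \<gamma> * norm (A x - b) + \<gamma>' * infdist x F)"
    using infdist_le_residual_plus_infdist[OF F(2,3) lin \<open>\<gamma> \<ge> 0\<close>] \<gamma> \<open>\<gamma> \<ge> 0\<close> by blast
  moreover have "infdist x {x\<in>F. A x = b} \<le> 1 / sigma_min A (span F) * norm (A x - b)"
    if "{x\<in>F. A x = b} = {x0}" "x \<in> span F" for x x0
    using unique_slice_infdist_le_sigma_min[OF F(1) lin dsc[folded F_def]] that xs X by auto
  ultimately show ?thesis unfolding X V F_def[symmetric] by blast
qed

end
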